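(* Let $k,m,n,r$ be integers with $n\ge 3$, $2\le m\le n$, $0\le r\le n-1$ and $1\le k\le\left\lfloor\frac{m}{2}\right\rfloor$. Then the sum of the elements of the multiset $\sigma_k(J^r_{n,m})$ equals $nk$ if $k<\frac{m}{2}$ or $n$ is even, and equals $(n-1)k$ if $k=\frac{m}{2}$ and $n$ is odd.
   Context: The cycle $C_n$ ($n\ge 3$) has vertex set $\{0,1,\dots,n-1\}$ with $i$ adjacent to $i+1 \bmod n$. For vertices $u,v$, $d(u,v)$ is the geodesic (shortest path) distance. For a set $A=\{a_0<a_1<\dots<a_{m-1}\}$ of vertices and $a_i,a_j\in A$, $\mathrm{span}_A(a_i,a_j)$ is the least positive integer congruent to $j-i$ modulo $m$. For $1\le k\le m-1$, $\sigma_k(A)$ is the multiset $[\,d(u,v): u,v\in A,\ u\ne v,\ \mathrm{span}_A(u,v)=k\,]$ taken over ordered pairs $(u,v)$. For integers $1\le m\le n$ and $0\le r\le n-1$, $J^r_{n,m}=\left\{\left\lfloor\frac{ni+r}{m}\right\rfloor : 0\le i<m\right\}$. *)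

theory Defs
  imports Main "HOL-Library.Multiset"
begin

text \<open>Geodesic distance in the cycle C_n on vertices 0..n-1.\<close>
definition cdist :: "nat \<Rightarrow> nat \<Rightarrow> nat \<Rightarrow> nat" where
  "cdist n u v = (let d = (if u \<le> v then v - u else u - v) in min d (n - d))"

text \<open>Position of x in the increasing enumeration a_0 < a_1 < ... of A.\<close>
definition idx :: "nat set \<Rightarrow> nat \<Rightarrow> nat" where
  "idx A x = card {y \<in> A. y < x}"

text \<open>span_A(a_i,a_j): least positive integer congruent to j - i modulo |A|.\<close>
definition span :: "nat set \<Rightarrow> nat \<Rightarrow> nat \<Rightarrow> nat" where
  "span A u v = (let s = nat ((int (idx A v) - int (idx A u)) mod int (card A))
                 in if s = 0 then card A else s)"

text \<open>sigma_k(A) in C_n, as a multiset over ordered pairs.\<close>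
definition sigma :: "nat \<Rightarrow> nat set \<Rightarrow> nat \<Rightarrow> nat multiset" where
  "sigma n A k = image_mset (\<lambda>(u, v). cdist n u v)
     (mset_set {(u, v). u \<in> A \<and> v \<in> A \<and> u \<noteq> v \<and> span A u v = k})"

definition J :: "nat \<Rightarrow> nat \<Rightarrow> nat \<Rightarrow> nat set" where
  "J n m r = (\<lambda>i. (n * i + r) div m) ` {..<m}"

end

theory Submission
  imports Defs
begin

text \<open>The points of \<open>J\<^sup>r\<^sub>n\<^sub>,\<^sub>m\<close> are \<open>a i = \<lfloor>(n i + r)/m\<rfloor>\<close>, \<open>i < m\<close>; extended to all \<open>i\<close>, this sequence
  is strictly increasing with \<open>a (i + m) = a i + n\<close>. Hence the pairs of span \<open>k\<close> are the pairs
  \<open>(a i, a ((i + k) mod m))\<close>, at distance \<open>min g (n - g)\<close> where \<open>g = a (i + k) - a i\<close>. These gaps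
  telescope to \<open>n k\<close> in total and lie between \<open>\<lfloor>nk/m\<rfloor>\<close> and \<open>\<lceil>nk/m\<rceil>\<close>. For \<open>2k < m\<close> this
  forces \<open>g \<le> n/2\<close>, so the distances are the gaps themselves; for \<open>2k = m\<close> it forces
  \<open>min g (n - g) = \<lfloor>n/2\<rfloor>\<close>.\<close>

lemma idx_strict_mono_image:
  fixes f :: "nat \<Rightarrow> nat"
  assumes "strict_mono f" "i < m"
  shows "idx (f ` {..<m}) (f i) = i"
proof -
  have "{y \<in> f ` {..<m}. y < f i} = f ` {..<i}"
    using assms by (auto simp: strict_mono_less)
  then show ?thesis
    using assms(1) by (simp add: idx_def card_image strict_mono_imp_inj_on inj_on_subset)
qed

lemma nat_diff_mod_eq_iff:
  fixes i j k m :: nat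
  assumes "i < m" "j < m" "0 < k" "k < m"
  shows "nat ((int j - int i) mod int m) = k \<longleftrightarrow> j = (i + k) mod m"
proof
  assume "nat ((int j - int i) mod int m) = k"
  then have "(int j - int i) mod int m = int k"
    using assms by simp
  then have "(int j - int i + int i) mod int m = (int k + int i) mod int m"
    by (metis mod_add_left_eq)
  then have "int j mod int m = int ((i + k) mod m)"
    by (simp add: of_nat_mod add.commute)
  then show "j = (i + k) mod m"
    using assms by (simp add: of_nat_mod[symmetric])
next
  assume j: "j = (i + k) mod m"
  have "(int j - int i) mod int m = ((int i + int k) mod int m - int i) mod int m"
    by (simp add: j of_nat_mod)
  also have "\<dots> = int k"
    using assms by (simp add: mod_diff_left_eq)
  finally show "nat ((int j - int i) mod int m) = k"
    by simp
qed

lemma span_strict_mono_image_iff: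
  fixes f :: "nat \<Rightarrow> nat"
  assumes "strict_mono f" "i < m" "j < m" "0 < k" "k < m"
  shows "span (f ` {..<m}) (f i) (f j) = k \<longleftrightarrow> j = (i + k) mod m"
proof -
  have "card (f ` {..<m}) = m"
    using assms(1) by (simp add: card_image strict_mono_imp_inj_on)
  then show ?thesis
    using assms nat_diff_mod_eq_iff[of i m j k]
    by (auto simp: span_def Let_def idx_strict_mono_image)
qed

lemma span_pairs_strict_mono_image:
  fixes f :: "nat \<Rightarrow> nat"
  assumes "strict_mono f" "0 < k" "k < m"
  defines "A \<equiv> f ` {..<m}"
  shows "{(u, v). u \<in> A \<and> v \<in> A \<and> u \<noteq> v \<and> span A u v = k}
           = (\<lambda>i. (f i, f ((i + k) mod m))) ` {..<m}"
proof (intro equalityI subsetI)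
  fix p assume "p \<in> {(u, v). u \<in> A \<and> v \<in> A \<and> u \<noteq> v \<and> span A u v = k}"
  then obtain i j where p: "p = (f i, f j)" "i < m" "j < m" "span A (f i) (f j) = k"
    by (auto simp: A_def)
  then show "p \<in> (\<lambda>i. (f i, f ((i + k) mod m))) ` {..<m}"
    using span_strict_mono_image_iff[OF assms(1) p(2,3) assms(2,3)] by (auto simp: A_def)
next
  fix p assume "p \<in> (\<lambda>i. (f i, f ((i + k) mod m))) ` {..<m}"
  then obtain i where p: "p = (f i, f ((i + k) mod m))" "i < m"
    by auto
  have j: "(i + k) mod m < m"
    using assms by simp
  have "(i + k) mod m \<noteq> i"
    using p(2) assms(2,3) by (cases "i + k < m") (auto simp: mod_if)
  then have "f i \<noteq> f ((i + k) mod m)"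
    using assms(1) by (metis strict_mono_eq)
  then show "p \<in> {(u, v). u \<in> A \<and> v \<in> A \<and> u \<noteq> v \<and> span A u v = k}"
    using p j span_strict_mono_image_iff[OF assms(1) p(2) j assms(2,3)] by (auto simp: A_def)
qed

lemma sum_sigma_strict_mono_image:
  fixes f :: "nat \<Rightarrow> nat"
  assumes "strict_mono f" "0 < k" "k < m"
  shows "sum_mset (sigma n (f ` {..<m}) k) = (\<Sum>i<m. cdist n (f i) (f ((i + k) mod m)))"
proof -
  have "inj_on (\<lambda>i. (f i, f ((i + k) mod m))) {..<m}"
    using assms(1) by (auto simp: inj_on_def strict_mono_eq)
  then show ?thesis
    unfolding sigma_def span_pairs_strict_mono_image[OF assms]
    by (simp add: sum_unfold_sum_mset[symmetric] sum.reindex)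
qed

lemma cdist_periodic:
  fixes f :: "nat \<Rightarrow> nat"
  assumes "mono f" "\<And>i. f (i + m) = f i + n" "i < m" "k \<le> m"
  shows "cdist n (f i) (f ((i + k) mod m)) = min (f (i + k) - f i) (n - (f (i + k) - f i))"
proof -
  have le: "f i \<le> f (i + k)"
    using monoD[OF assms(1), of i "i + k"] by simp
  have "f (i + k) \<le> f (i + m)"
    using monoD[OF assms(1), of "i + k" "i + m"] assms(4) by simp
  then have le_period: "f (i + k) \<le> f i + n"
    using assms(2) by simp
  show ?thesis
  proof (cases "i + k < m")
    case True
    then show ?thesis
      using le by (simp add: cdist_def Let_def)
  next
    case False
    then have "(i + k) mod m = i + k - m"
      using assms(3,4) by (simp add: mod_if)
    moreover have "f (i + k) = f (i + k - m) + n"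
      using False assms(2)[of "i + k - m"] by simp
    ultimately show ?thesis
      using le le_period by (simp add: cdist_def Let_def min.commute add.commute)
  qed
qed

lemma sum_shift_periodic:
  fixes f :: "nat \<Rightarrow> nat"
  assumes "\<And>i. f (i + m) = f i + n"
  shows "(\<Sum>i<m. f (i + k)) = (\<Sum>i<m. f i) + n * k"
proof (induction k)
  case 0
  then show ?case by simp
next
  case (Suc k)
  have "(\<Sum>i<m. f (i + Suc k)) + f k = (\<Sum>i<Suc m. f (i + k))"
    by (simp add: sum.lessThan_Suc_shift del: sum.lessThan_Suc)
  also have "\<dots> = (\<Sum>i<m. f (i + k)) + f k + n"
    using assms[of k] by (simp add: add.commute)
  finally show ?case
    using Suc by simp
qed

lemma div_add_le_div_add_ceiling:
  fixes x y m :: nat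
  assumes "0 < m"
  shows "(x + y) div m \<le> x div m + (y + m - 1) div m"
proof -
  have "(x + y) div m = x div m + (x mod m + y) div m"
    using div_add1_eq[of x y m] div_add1_eq[of "x mod m" y m] by simp
  moreover have "(x mod m + y) div m \<le> (y + m - 1) div m"
    using mod_less_divisor[OF assms, of x] by (intro div_le_mono) linarith
  ultimately show ?thesis
    by linarith
qed

definition floor_point :: "nat \<Rightarrow> nat \<Rightarrow> nat \<Rightarrow> nat \<Rightarrow> nat" where
  "floor_point n m r i = (n * i + r) div m"

lemma J_eq_image_floor_point: "J n m r = floor_point n m r ` {..<m}"
  by (simp add: J_def floor_point_def[abs_def])

lemma strict_mono_floor_point:
  assumes "0 < m" "m \<le> n"
  shows "strict_mono (floor_point n m r)"
proof (rule strict_mono_Suc_iff[THEN iffD2], rule allI)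
  fix i
  have "(n * i + r) div m < (n * i + r + m) div m"
    using assms by (simp add: div_add_self2)
  also have "\<dots> \<le> (n * i + r + n) div m"
    using assms by (intro div_le_mono) simp
  finally show "floor_point n m r i < floor_point n m r (Suc i)"
    by (simp add: floor_point_def algebra_simps)
qed

lemma floor_point_add_period:
  assumes "0 < m"
  shows "floor_point n m r (i + m) = floor_point n m r i + n"
proof -
  have "floor_point n m r (i + m) = (n * i + r + n * m) div m"
    by (simp add: floor_point_def algebra_simps)
  also have "\<dots> = n + floor_point n m r i"
    unfolding floor_point_def using assms by (rule div_mult_self1[OF less_not_refl2])
  finally show ?thesis
    by simp
qed

definition floor_gap :: "nat \<Rightarrow> nat \<Rightarrow> nat \<Rightarrow> nat \<Rightarrow> nat \<Rightarrow> nat" where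
  "floor_gap n m r k i = floor_point n m r (i + k) - floor_point n m r i"

lemma floor_gap_ge:
  "(n * k) div m \<le> floor_gap n m r k i"
  using div_add1_eq[of "n * i + r" "n * k" m]
  by (simp add: floor_gap_def floor_point_def algebra_simps)

lemma floor_gap_le:
  assumes "0 < m"
  shows "floor_gap n m r k i \<le> (n * k + m - 1) div m"
  using div_add_le_div_add_ceiling[OF assms, of "n * i + r" "n * k"]
  by (simp add: floor_gap_def floor_point_def algebra_simps)

lemma sum_floor_gap:
  assumes "0 < m" "m \<le> n"
  shows "(\<Sum>i<m. floor_gap n m r k i) = n * k"
proof -
  have "floor_point n m r i \<le> floor_point n m r (i + k)" for i
    using strict_mono_floor_point[OF assms] by (simp add: strict_mono_less_eq)
  then show ?thesis
    using sum_shift_periodic[of "floor_point n m r" m n k] floor_point_add_period[OF assms(1)]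
    by (simp add: floor_gap_def sum_subtractf_nat)
qed

lemma sum_sigma_J:
  assumes "0 < m" "m \<le> n" "0 < k" "k < m"
  shows "sum_mset (sigma n (J n m r) k) = (\<Sum>i<m. min (floor_gap n m r k i) (n - floor_gap n m r k i))"
proof -
  have mono: "strict_mono (floor_point n m r)"
    using strict_mono_floor_point[OF assms(1,2)] .
  show ?thesis
    using sum_sigma_strict_mono_image[OF mono assms(3,4)]
      cdist_periodic[OF strict_mono_mono[OF mono] floor_point_add_period[OF assms(1)]] assms(4)
    by (simp add: J_eq_image_floor_point floor_gap_def)
qed

lemma twice_ceiling_div_le:
  fixes n m k :: nat
  assumes "2 * k < m" "m \<le> n"
  shows "2 * ((n * k + m - 1) div m) \<le> n"
proof -
  define c where "c = (n * k + m - 1) div m"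
  have "n * (2 * k + 1) \<le> n * m"
    using assms(1) by (intro mult_le_mono2) simp
  moreover have "c * m \<le> n * k + m - 1"
    unfolding c_def by (rule div_times_less_eq_dividend)
  moreover have "n * (2 * k + 1) = 2 * (n * k) + n" "(2 * c) * m = 2 * (c * m)"
    "(n + 1) * m = n * m + m"
    by (simp_all add: algebra_simps)
  ultimately have "(2 * c) * m < (n + 1) * m"
    using assms by linarith
  then have "2 * c < n + 1"
    using mult_less_cancel2 by blast
  then show ?thesis
    unfolding c_def by simp
qed

lemma twice_ceiling_div_le_Suc:
  fixes n m k :: nat
  assumes "0 < m" "2 * k \<le> m"
  shows "2 * ((n * k + m - 1) div m) \<le> n + 1"
proof -
  define c where "c = (n * k + m - 1) div m"
  have "n * (2 * k) \<le> n * m"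
    using assms(2) by (rule mult_le_mono2)
  moreover have "c * m \<le> n * k + m - 1"
    unfolding c_def by (rule div_times_less_eq_dividend)
  moreover have "n * (2 * k) = 2 * (n * k)" "(2 * c) * m = 2 * (c * m)" "(n + 2) * m = n * m + 2 * m"
    by (simp_all add: algebra_simps)
  ultimately have "(2 * c) * m < (n + 2) * m"
    using assms(1) by linarith
  then have "2 * c < n + 2"
    using mult_less_cancel2 by blast
  then show ?thesis
    unfolding c_def by simp
qed

theorem mainTheorem2:
  fixes k m n r :: nat
  assumes "n \<ge> 3" and "2 \<le> m" and "m \<le> n" and "r \<le> n - 1"
    and "1 \<le> k" and "k \<le> m div 2"
  shows "sum_mset (sigma n (J n m r) k) =
           (if 2 * k < m \<or> even n then n * k else (n - 1) * k)"
proof -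
  have m0: "0 < m" and k: "0 < k" "k < m"
    using assms by auto
  show ?thesis
  proof (cases "2 * k < m")
    case True
    then have "min (floor_gap n m r k i) (n - floor_gap n m r k i) = floor_gap n m r k i" for i
      using floor_gap_le[OF m0, of n r k i] twice_ceiling_div_le[OF True assms(3)] by linarith
    then show ?thesis
      using sum_sigma_J[OF m0 assms(3) k] sum_floor_gap[OF m0 assms(3)] True by simp
  next
    case False
    then have m: "m = 2 * k"
      using assms(6) by simp
    then have "(n * k) div m = n div 2"
      using k(1) by (simp add: mult.commute)
    then have "min (floor_gap n m r k i) (n - floor_gap n m r k i) = n div 2" for i
      using floor_gap_ge[of n k m r i] floor_gap_le[OF m0, of n r k i]
        twice_ceiling_div_le_Suc[OF m0, of k n] m by linarith
    then show ?thesis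
      using sum_sigma_J[OF m0 assms(3) k] False m by (auto elim!: evenE oddE simp: algebra_simps)
  qed
qed

end
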